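(* Let $K$ and $K'$ be virtual knot diagrams such that $K'$ can be obtained from $K$ by a finite sequence of generalized Reidemeister moves and crossing changes (switching the over/under information at real crossings). Then $$W_K(t)-W_K(t^{-1})=W_{K'}(t)-W_{K'}(t^{-1}).$$ Consequently $\mathfrak{F}_{F(K)}(t):=W_K(t)-W_K(t^{-1})$ is a well-defined invariant of the flat virtual knot $F(K)$.
   Context: Virtual knot diagrams are planar immersed circles whose double points are real crossings (with over/under information) or virtual crossings; generalized Reidemeister moves are the three classical Reidemeister moves $\Omega_1,\Omega_2,\Omega_3$, the three purely virtual moves, and the mixed move $\Omega_3^v$ in which a strand containing only virtual crossings passes over a real crossing. Each real crossing $c$ has a writhe $w(c)\in\{\pm1\}$ (usual sign); $w(K)=\sum_c w(c)$. Gauss diagram and chord index: the Gauss diagram $G(K)$ is a circle (the preimage of the knot, oriented counterclockwise) with, for each real crossing $c$, a chord directed from the preimage of the overcrossing to the preimage of the undercrossing and carrying the sign $w(c)$. Say a chord $d$ crosses a chord $c$ if the endpoints of $d$ separate the endpoints of $c$ on the circle; viewing $c$ as an arrow in the disk bounded by the circle, $d$ crosses $c$ from left to right if the tail of $d$ is on the left of $c$ and its head on the right, and from right to left otherwise. Let $r_+(c), r_-(c)$ be the numbers of positive, resp. negative, chords crossing $c$ from left to right, and $l_+(c), l_-(c)$ those crossing from right to left. The index of $c$ is $\mathrm{Ind}(c)=r_+(c)-r_-(c)-l_+(c)+l_-(c)$. Writhe polynomial: $a_n(K)=\sum_{\mathrm{Ind}(c)=n}w(c)$ for $n\neq0$,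 and $W_K(t)=\sum_{n\neq 0}a_n(K)t^n$; it is known to be a virtual knot invariant. Flat virtual knots: flat virtual knot diagrams are obtained by replacing real crossings by flat (unsigned, no over/under) crossings, modulo the flat versions of the generalized Reidemeister moves; $F(K)$ denotes the flat virtual knot obtained from $K$ by flattening all real crossings. *)

theory Defs
  imports Complex_Main
begin

text \<open>A virtual knot diagram, up to the purely virtual and mixed moves, is
  encoded by its Gauss diagram.  A Gauss diagram is a Gauss word: the list of
  passages through real crossings in the order met while traversing the knot
  (= counterclockwise order on the circle of the Gauss diagram).  A letter
  (c, True) is the over-passage of crossing c (tail of the chord), (c, False)
  the under-passage (head of the chord).  The sign function gives w(c).\<close>

type_synonym letter = "nat \<times> bool"
type_synonym gdiag = "letter list \<times> (nat \<Rightarrow> int)"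

definition labels :: "letter list \<Rightarrow> nat set" where
  "labels w = fst ` set w"

definition gauss_wf :: "gdiag \<Rightarrow> bool" where
  "gauss_wf K = (case K of (w, s) \<Rightarrow>
     distinct w \<and>
     (\<forall>c \<in> labels w. (c, True) \<in> set w \<and> (c, False) \<in> set w \<and> (s c = 1 \<or> s c = -1)))"

definition lpos :: "letter list \<Rightarrow> letter \<Rightarrow> nat" where
  "lpos w x = (LEAST i. i < length w \<and> w ! i = x)"

definition tailpos :: "letter list \<Rightarrow> nat \<Rightarrow> nat" where
  "tailpos w c = lpos w (c, True)"

definition headpos :: "letter list \<Rightarrow> nat \<Rightarrow> nat" where
  "headpos w c = lpos w (c, False)"

text \<open>Position p lies on the right of chord c: it lies on the arc running
  counterclockwise from the tail of c to its head.\<close>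
definition on_right :: "letter list \<Rightarrow> nat \<Rightarrow> nat \<Rightarrow> bool" where
  "on_right w c p = (let t = tailpos w c; h = headpos w c in
     if t < h then t < p \<and> p < h else t < p \<or> p < h)"

definition crosses_LR :: "letter list \<Rightarrow> nat \<Rightarrow> nat \<Rightarrow> bool" where
  "crosses_LR w c d = (d \<noteq> c \<and> \<not> on_right w c (tailpos w d) \<and> on_right w c (headpos w d))"

definition crosses_RL :: "letter list \<Rightarrow> nat \<Rightarrow> nat \<Rightarrow> bool" where
  "crosses_RL w c d = (d \<noteq> c \<and> on_right w c (tailpos w d) \<and> \<not> on_right w c (headpos w d))"

text \<open>Ind(c) = r+(c) - r-(c) - l+(c) + l-(c).\<close>
definition chord_index :: "gdiag \<Rightarrow> nat \<Rightarrow> int" where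
  "chord_index K c = (case K of (w, s) \<Rightarrow>
     (\<Sum>d\<in>labels w. (if crosses_LR w c d then s d else 0)
                    - (if crosses_RL w c d then s d else 0)))"

text \<open>Writhe polynomial W_K(t) = sum over n \<noteq> 0 of a_n(K) t^n, as a Laurent
  polynomial function of a nonzero real t.\<close>
definition writhe_poly :: "gdiag \<Rightarrow> real \<Rightarrow> real" where
  "writhe_poly K t = (case K of (w, s) \<Rightarrow>
     (\<Sum>c\<in>labels w. if chord_index K c \<noteq> 0
                     then real_of_int (s c) * t powi chord_index K c else 0))"

definition frakF :: "gdiag \<Rightarrow> real \<Rightarrow> real" where
  "frakF K t = writhe_poly K t - writhe_poly K (inverse t)"

definition rot_move :: "gdiag \<Rightarrow> gdiag \<Rightarrow> bool" where
  "rot_move K K' = (\<exists>w s n. K = (w, s) \<and> K' = (rotate n w, s))"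

text \<open>Renaming of crossings (isomorphic Gauss diagrams; values of the sign
  function away from the chords are irrelevant).\<close>
definition iso_move :: "gdiag \<Rightarrow> gdiag \<Rightarrow> bool" where
  "iso_move K K' = (\<exists>w s w' s' f. K = (w, s) \<and> K' = (w', s') \<and> inj_on f (labels w) \<and>
      w' = map (\<lambda>(c, ov). (f c, ov)) w \<and> (\<forall>c\<in>labels w. s' (f c) = s c))"

definition sg :: "bool \<Rightarrow> int" where
  "sg b = (if b then 1 else -1)"

definition R1_move :: "gdiag \<Rightarrow> gdiag \<Rightarrow> bool" where
  "R1_move K K' = (\<exists>u v s c ov e. K = (u @ v, s) \<and> c \<notin> labels (u @ v) \<and> (e = 1 \<or> e = -1) \<and>
      K' = (u @ [(c, ov), (c, \<not> ov)] @ v, s(c := e)))"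

definition R2_move :: "gdiag \<Rightarrow> gdiag \<Rightarrow> bool" where
  "R2_move K K' = (\<exists>u v x s c d ov e. K = (u @ v @ x, s) \<and>
      c \<notin> labels (u @ v @ x) \<and> d \<notin> labels (u @ v @ x) \<and> c \<noteq> d \<and> (e = 1 \<or> e = -1) \<and>
      (K' = (u @ [(c, ov), (d, ov)] @ v @ [(c, \<not> ov), (d, \<not> ov)] @ x, s(c := e, d := - e)) \<or>
       K' = (u @ [(c, ov), (d, ov)] @ v @ [(d, \<not> ov), (c, \<not> ov)] @ x, s(c := e, d := - e))))"

text \<open>Three arcs (lines 1, 2, 3 in word order) each
  containing two adjacent endpoints; chord X joins lines 1,2, chord Y lines 2,3,
  chord Z lines 3,1.  eta_i records the order in which line i meets the other
  two lines.  The move is realisable iff the heights are not cyclic and the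
  sign condition below (derived from the planar triangle) holds.\<close>
definition R3_cond :: "(nat \<Rightarrow> int) \<Rightarrow> letter \<Rightarrow> letter \<Rightarrow> letter \<Rightarrow> letter \<Rightarrow> letter \<Rightarrow> letter \<Rightarrow> bool" where
  "R3_cond s a b c d e f = (\<exists>X Y Z. distinct [X, Y, Z] \<and>
      {fst a, fst b} = {X, Z} \<and> {fst c, fst d} = {X, Y} \<and> {fst e, fst f} = {Y, Z} \<and>
      (let eta1 = (fst a = X); eta2 = (fst c = Y); eta3 = (fst e = Z);
           rX = s X * sg (eta1 = eta2) * sg ((X, True) \<in> {c, d});
           rY = s Y * sg (eta2 = eta3) * sg ((Y, True) \<in> {e, f});
           rZ = s Z * sg (eta3 = eta1) * sg ((Z, True) \<in> {a, b})
       in rX = rY \<and> rY = rZ \<and>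
          \<not> ((X, True) \<in> {c, d} \<and> (Y, True) \<in> {e, f} \<and> (Z, True) \<in> {a, b}) \<and>
          \<not> ((X, True) \<in> {a, b} \<and> (Y, True) \<in> {c, d} \<and> (Z, True) \<in> {e, f})))"

definition R3_move :: "gdiag \<Rightarrow> gdiag \<Rightarrow> bool" where
  "R3_move K K' = (\<exists>u v x y s a b c d e f. R3_cond s a b c d e f \<and>
      K = (u @ [a, b] @ v @ [c, d] @ x @ [e, f] @ y, s) \<and>
      K' = (u @ [b, a] @ v @ [d, c] @ x @ [f, e] @ y, s))"

definition cc_move :: "gdiag \<Rightarrow> gdiag \<Rightarrow> bool" where
  "cc_move K K' = (\<exists>w s c. K = (w, s) \<and> c \<in> labels w \<and>
      K' = (map (\<lambda>(d, ov). if d = c then (d, \<not> ov) else (d, ov)) w, s(c := - s c)))"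

definition gen_step :: "gdiag \<Rightarrow> gdiag \<Rightarrow> bool" where
  "gen_step K K' = (rot_move K K' \<or> iso_move K K' \<or> R1_move K K' \<or> R2_move K K' \<or>
                    R3_move K K' \<or> cc_move K K')"

definition moves_cc_equiv :: "gdiag \<Rightarrow> gdiag \<Rightarrow> bool" where
  "moves_cc_equiv = (\<lambda>K K'. gen_step K K' \<or> gen_step K' K)\<^sup>*\<^sup>*"

text \<open>Flat Gauss diagram (Turaev's arrow diagram of a virtual string): unsigned
  but directed chords.  Flattening a real crossing c keeps the geometric arrow:
  it agrees with the over-to-under direction when w(c) = +1 and is reversed when
  w(c) = -1.  A letter (c, True) is the tail of the flat chord c.\<close>
type_synonym fword = "(nat \<times> bool) list"

definition flatten :: "gdiag \<Rightarrow> fword" where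
  "flatten K = (case K of (w, s) \<Rightarrow> map (\<lambda>(c, ov). (c, ov = (s c = 1))) w)"

definition frot_move :: "fword \<Rightarrow> fword \<Rightarrow> bool" where
  "frot_move w w' = (\<exists>n. w' = rotate n w)"

definition fiso_move :: "fword \<Rightarrow> fword \<Rightarrow> bool" where
  "fiso_move w w' = (\<exists>f. inj_on f (labels w) \<and> w' = map (\<lambda>(c, b). (f c, b)) w)"

definition F1_move :: "fword \<Rightarrow> fword \<Rightarrow> bool" where
  "F1_move w w' = (\<exists>u v c b. w = u @ v \<and> c \<notin> labels w \<and> w' = u @ [(c, b), (c, \<not> b)] @ v)"

definition F2_move :: "fword \<Rightarrow> fword \<Rightarrow> bool" where
  "F2_move w w' = (\<exists>u v x c d b. w = u @ v @ x \<and> c \<notin> labels w \<and> d \<notin> labels w \<and> c \<noteq> d \<and>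
      (w' = u @ [(c, b), (d, \<not> b)] @ v @ [(c, \<not> b), (d, b)] @ x \<or>
       w' = u @ [(c, b), (d, \<not> b)] @ v @ [(d, b), (c, \<not> b)] @ x))"

text \<open>Flat third move: same triangle condition as for R3, where the signed
  over/under data is replaced by the flat arrow direction.\<close>
definition F3_cond :: "letter \<Rightarrow> letter \<Rightarrow> letter \<Rightarrow> letter \<Rightarrow> letter \<Rightarrow> letter \<Rightarrow> bool" where
  "F3_cond a b c d e f = (\<exists>X Y Z. distinct [X, Y, Z] \<and>
      {fst a, fst b} = {X, Z} \<and> {fst c, fst d} = {X, Y} \<and> {fst e, fst f} = {Y, Z} \<and>
      (let eta1 = (fst a = X); eta2 = (fst c = Y); eta3 = (fst e = Z);
           rX = sg (eta1 = eta2) * sg ((X, True) \<in> {c, d});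
           rY = sg (eta2 = eta3) * sg ((Y, True) \<in> {e, f});
           rZ = sg (eta3 = eta1) * sg ((Z, True) \<in> {a, b})
       in rX = rY \<and> rY = rZ))"

definition F3_move :: "fword \<Rightarrow> fword \<Rightarrow> bool" where
  "F3_move w w' = (\<exists>u v x y a b c d e f. F3_cond a b c d e f \<and>
      w = u @ [a, b] @ v @ [c, d] @ x @ [e, f] @ y \<and>
      w' = u @ [b, a] @ v @ [d, c] @ x @ [f, e] @ y)"

definition flat_step :: "fword \<Rightarrow> fword \<Rightarrow> bool" where
  "flat_step w w' = (frot_move w w' \<or> fiso_move w w' \<or> F1_move w w' \<or> F2_move w w' \<or> F3_move w w')"

definition flat_equiv :: "fword \<Rightarrow> fword \<Rightarrow> bool" where
  "flat_equiv = (\<lambda>w w'. flat_step w w' \<or> flat_step w' w)\<^sup>*\<^sup>*"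

end

(* In a Gauss word, give the head of a chord d the weight w(d) and its tail the weight -w(d).
   The index of a chord c is then the total weight of the letters on the arc from the tail to the
   head of c: a chord crossing c contributes through its endpoint on that arc, and a chord with
   both endpoints on the arc contributes nothing.  Flattening reverses exactly the negative chords,
   and reversing a chord replaces its arc by the complementary one; since all weights sum to zero,
   this negates the index.  Hence w(c) (t^Ind(c) - t^-Ind(c)) = t^i - t^-i, where i is the index of
   c in the flat diagram (all signs taken to be 1), and W_K(t) - W_K(1/t) depends only on F(K).
   Every generalized move or crossing change of K induces a flat move or nothing on F(K), so it
   remains to check invariance under flat moves.  Rotations and renamings preserve all indices.
   The first two flat moves insert pairs of adjacent letters of total weight zero, which do not
   change the other indices, and add a chord of index 0 or two chords of opposite indices.  The
   third move exchanges three pairs of adjacent letters; each exchange shifts only the indices of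
   the two chords involved, and the triangle condition makes the three shifts cancel. *)

theory Submission
  imports Defs "HOL-Combinatorics.Transposition"
begin

section \<open>Positions and cyclic order\<close>

lemma lpos_less_length: "x \<in> set w \<Longrightarrow> lpos w x < length w"
  and nth_lpos: "x \<in> set w \<Longrightarrow> w ! lpos w x = x"
  unfolding lpos_def by (metis (mono_tags, lifting) LeastI_ex in_set_conv_nth)+

lemma lpos_nth: "distinct w \<Longrightarrow> i < length w \<Longrightarrow> lpos w (w ! i) = i"
  unfolding lpos_def by (rule Least_equality) (auto simp: nth_eq_iff_index_eq)

lemma lpos_eq_iff: "x \<in> set w \<Longrightarrow> y \<in> set w \<Longrightarrow> lpos w x = lpos w y \<longleftrightarrow> x = y"
  by (metis nth_lpos)

lemma lpos_append_left: "distinct (u @ v) \<Longrightarrow> x \<in> set u \<Longrightarrow> lpos (u @ v) x = lpos u x"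
  using lpos_nth[of "u @ v" "lpos u x"] lpos_less_length[of x u] by (simp add: nth_lpos nth_append)

lemma lpos_append_right:
  "distinct (u @ v) \<Longrightarrow> x \<in> set v \<Longrightarrow> lpos (u @ v) x = length u + lpos v x"
  using lpos_nth[of "u @ v" "length u + lpos v x"] by (simp add: lpos_less_length nth_lpos nth_append)

lemma lpos_Cons_self: "lpos (a # w) a = 0"
  unfolding lpos_def by (rule Least_equality) auto

lemma lpos_Cons_other: "distinct (a # w) \<Longrightarrow> x \<in> set w \<Longrightarrow> lpos (a # w) x = Suc (lpos w x)"
  using lpos_append_right[of "[a]" w x] by simp

lemma lpos_map:
  assumes "inj_on g (set w)" "x \<in> set w"
  shows "lpos (map g w) (g x) = lpos w x"
proof -
  have "map g w ! i = g x \<longleftrightarrow> w ! i = x" if "i < length w" for i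
    using inj_on_eq_iff[OF assms(1) nth_mem assms(2)] that by simp
  then show ?thesis unfolding lpos_def by (metis length_map)
qed

lemma lpos_pair:
  assumes "distinct (u @ p # q # v)"
  shows "lpos (u @ p # q # v) p = length u" and "lpos (u @ p # q # v) q = Suc (length u)"
  using assms by (simp_all add: lpos_append_right lpos_Cons_self lpos_Cons_other)

lemma lpos_insert_pair:
  assumes "distinct (u @ p # q # v)" and "y \<in> set (u @ v)"
  shows "lpos (u @ p # q # v) y =
    (if lpos (u @ v) y < length u then lpos (u @ v) y else lpos (u @ v) y + 2)"
  using assms lpos_less_length[of y u] by (auto simp: lpos_append_left lpos_append_right lpos_Cons_other)

lemma lpos_swap_adjacent:
  assumes "distinct (u @ p # q # v)" and "y \<in> set (u @ p # q # v)"
  shows "lpos (u @ q # p # v) y =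
    Transposition.transpose (length u) (Suc (length u)) (lpos (u @ p # q # v) y)"
  using assms lpos_less_length[of y u]
  by (auto simp: lpos_append_left lpos_append_right lpos_Cons_self lpos_Cons_other)

definition cyc_between :: "nat \<Rightarrow> nat \<Rightarrow> nat \<Rightarrow> bool" where
  "cyc_between i j k \<longleftrightarrow> i < j \<and> j < k \<or> j < k \<and> k < i \<or> k < i \<and> i < j"

lemma cyc_between_irrefl [simp]: "\<not> cyc_between i i k" "\<not> cyc_between i k k"
  unfolding cyc_between_def by auto

lemma cyc_between_strict_mono:
  "strict_mono m \<Longrightarrow> cyc_between (m i) (m j) (m k) = cyc_between i j k"
  unfolding cyc_between_def by (simp add: strict_mono_less)

lemma cyc_between_rotate:
  assumes "i < n" "j < n" "k < n"
  shows "cyc_between (if i = 0 then n - 1 else i - 1) (if j = 0 then n - 1 else j - 1)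
           (if k = 0 then n - 1 else k - 1) = cyc_between i j k"
  using assms unfolding cyc_between_def by (cases "i = 0"; cases "j = 0"; cases "k = 0"; simp; arith)

lemma cyc_between_swap_ends:
  "i \<noteq> k \<Longrightarrow> cyc_between k j i \<longleftrightarrow> \<not> cyc_between i j k \<and> j \<noteq> i \<and> j \<noteq> k"
  unfolding cyc_between_def by arith

lemma transpose_Suc_less_iff:
  "{a, b} \<noteq> {L, Suc L} \<Longrightarrow>
     Transposition.transpose L (Suc L) a < Transposition.transpose L (Suc L) b \<longleftrightarrow> a < b"
  unfolding Transposition.transpose_def by (auto simp: doubleton_eq_iff)

lemma cyc_between_transpose:
  assumes "\<not> {L, Suc L} \<subseteq> {i, j, k}"
  shows "cyc_between (Transposition.transpose L (Suc L) i) (Transposition.transpose L (Suc L) j)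
           (Transposition.transpose L (Suc L) k) = cyc_between i j k"
proof -
  have "{a, b} \<noteq> {L, Suc L}" if "a \<in> {i, j, k}" "b \<in> {i, j, k}" for a b
    using assms that by auto
  then show ?thesis unfolding cyc_between_def by (simp add: transpose_Suc_less_iff)
qed

lemma cyc_between_adjacent:
  "i \<notin> {L, Suc L} \<Longrightarrow> k \<notin> {L, Suc L} \<Longrightarrow> cyc_between i L k = cyc_between i (Suc L) k"
  unfolding cyc_between_def by auto

(* The letters at positions L and Suc L have weights a and b; the left-hand side counts them on
   the arc from i to k after these two letters have been exchanged. *)
lemma cyc_between_transpose_adjacent:
  fixes a b :: int
  assumes "i \<noteq> k" "{i, k} \<noteq> {L, Suc L}"
  defines "\<tau> \<equiv> Transposition.transpose L (Suc L)"
  shows "(if cyc_between (\<tau> i) (Suc L) (\<tau> k) then a else 0) + (if cyc_between (\<tau> i) L (\<tau> k) then b else 0) =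
    (if cyc_between i L k then a else 0) + (if cyc_between i (Suc L) k then b else 0) +
    ((if i = L then - b else 0) + (if i = Suc L then a else 0) +
     (if k = L then b else 0) + (if k = Suc L then - a else 0))"
proof (cases "i \<in> {L, Suc L} \<or> k \<in> {L, Suc L}")
  case True
  then show ?thesis using assms by (auto simp: \<tau>_def cyc_between_def)
next
  case False
  then show ?thesis using cyc_between_adjacent[of i L k] by (simp add: \<tau>_def)
qed

section \<open>Arc sums and the chord index\<close>

definition gauss_word :: "letter list \<Rightarrow> bool" where
  "gauss_word w \<longleftrightarrow> distinct w \<and> (\<forall>c\<in>labels w. (c, True) \<in> set w \<and> (c, False) \<in> set w)"

lemma gauss_wf_iff: "gauss_wf (w, s) \<longleftrightarrow> gauss_word w \<and> (\<forall>c\<in>labels w. s c = 1 \<or> s c = -1)"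
  unfolding gauss_wf_def gauss_word_def by auto

lemma finite_labels [simp]: "finite (labels w)"
  unfolding labels_def by simp

lemma labels_append [simp]: "labels (u @ v) = labels u \<union> labels v"
  and labels_Cons [simp]: "labels (x # v) = insert (fst x) (labels v)"
  and labels_Nil [simp]: "labels [] = {}"
  unfolding labels_def by auto

lemma notin_labels: "c \<notin> labels w \<Longrightarrow> (c, b) \<notin> set w"
  unfolding labels_def by force

lemma set_gauss_word: "gauss_word w \<Longrightarrow> set w = labels w \<times> UNIV"
proof (rule set_eqI)
  fix y :: letter assume "gauss_word w"
  then show "y \<in> set w \<longleftrightarrow> y \<in> labels w \<times> UNIV"
    unfolding gauss_word_def labels_def by (cases y; cases "snd y") (auto simp: image_iff intro: rev_bexI)
qed

lemma sum_set_gauss_word: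
  "gauss_word w \<Longrightarrow> (\<Sum>y\<in>set w. F y) = (\<Sum>c\<in>labels w. F (c, True) + F (c, False))"
proof -
  assume "gauss_word w"
  then have "(\<Sum>y\<in>set w. F y) = (\<Sum>c\<in>labels w. \<Sum>b\<in>UNIV. F (c, b))"
    by (simp add: set_gauss_word sum.cartesian_product)
  then show ?thesis by (simp add: UNIV_bool add.commute)
qed

definition letter_weight :: "(nat \<Rightarrow> int) \<Rightarrow> letter \<Rightarrow> int" where
  "letter_weight s y = (if snd y then - s (fst y) else s (fst y))"

lemma sum_letter_weight: "gauss_word w \<Longrightarrow> (\<Sum>y\<in>set w. letter_weight s y) = 0"
  by (simp add: sum_set_gauss_word letter_weight_def)

definition between :: "letter list \<Rightarrow> letter \<Rightarrow> letter \<Rightarrow> letter \<Rightarrow> bool" where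
  "between w x y z \<longleftrightarrow> cyc_between (lpos w x) (lpos w y) (lpos w z)"

lemma between_irrefl [simp]: "\<not> between w x x z" "\<not> between w x z z"
  unfolding between_def by simp_all

definition arc_sum :: "(nat \<Rightarrow> int) \<Rightarrow> letter list \<Rightarrow> letter \<Rightarrow> letter \<Rightarrow> int" where
  "arc_sum s w x z = (\<Sum>y\<in>set w. if between w x y z then letter_weight s y else 0)"

definition arc_index :: "(nat \<Rightarrow> int) \<Rightarrow> letter list \<Rightarrow> nat \<Rightarrow> int" where
  "arc_index s w c = arc_sum s w (c, True) (c, False)"

lemma on_right_iff_cyc_between:
  "tailpos w c \<noteq> headpos w c \<Longrightarrow> on_right w c p \<longleftrightarrow> cyc_between (tailpos w c) p (headpos w c)"
  unfolding on_right_def cyc_between_def Let_def by auto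

lemma chord_index_eq_arc_index:
  assumes "gauss_word w" "c \<in> labels w"
  shows "chord_index (w, s) c = arc_index s w c"
  unfolding chord_index_def arc_index_def arc_sum_def sum_set_gauss_word[OF assms(1)]
proof (simp, rule sum.cong[OF refl])
  have "tailpos w c \<noteq> headpos w c"
    using assms lpos_eq_iff[of "(c, True)" w "(c, False)"]
    unfolding gauss_word_def tailpos_def headpos_def by auto
  note on_right = on_right_iff_cyc_between[OF this]
  show "(if crosses_LR w c d then s d else 0) - (if crosses_RL w c d then s d else 0) =
      (if between w (c, True) (d, True) (c, False) then letter_weight s (d, True) else 0) +
      (if between w (c, True) (d, False) (c, False) then letter_weight s (d, False) else 0)" for d
  proof (cases "d = c")
    case True
    then show ?thesis by (simp add: crosses_LR_def crosses_RL_def between_def cyc_between_def)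
  next
    case False
    then show ?thesis
      unfolding crosses_LR_def crosses_RL_def on_right between_def letter_weight_def
      by (simp add: tailpos_def headpos_def)
  qed
qed

lemma arc_sum_swap_ends:
  assumes w: "gauss_word w" and x: "x \<in> set w" and z: "z \<in> set w" and "x \<noteq> z"
  shows "arc_sum s w z x = - arc_sum s w x z - letter_weight s x - letter_weight s z"
proof -
  have ne: "lpos w x \<noteq> lpos w z" using lpos_eq_iff[OF x z] \<open>x \<noteq> z\<close> by simp
  have "between w z y x \<longleftrightarrow> \<not> between w x y z \<and> y \<noteq> x \<and> y \<noteq> z" if "y \<in> set w" for y
    unfolding between_def using cyc_between_swap_ends[OF ne] by (simp add: lpos_eq_iff that x z)
  then have "(if between w z y x then letter_weight s y else 0) =
      letter_weight s y - (if between w x y z then letter_weight s y else 0)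
      - (if y = x then letter_weight s y else 0) - (if y = z then letter_weight s y else 0)"
    if "y \<in> set w" for y
    using that \<open>x \<noteq> z\<close> by auto
  then have "arc_sum s w z x = (\<Sum>y\<in>set w. letter_weight s y) - arc_sum s w x z
      - letter_weight s x - letter_weight s z"
    unfolding arc_sum_def by (simp add: sum_subtractf x z)
  then show ?thesis using sum_letter_weight[OF w] by simp
qed

lemma arc_sum_map:
  assumes g: "inj_on g (set w)" and x: "x \<in> set w" and z: "z \<in> set w"
    and weight: "\<And>y. y \<in> set w \<Longrightarrow> letter_weight s' (g y) = letter_weight s y"
  shows "arc_sum s' (map g w) (g x) (g z) = arc_sum s w x z"
proof -
  have "between (map g w) (g x) (g y) (g z) = between w x y z" if "y \<in> set w" for y
    unfolding between_def using lpos_map[OF g] x z that by simp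
  then show ?thesis unfolding arc_sum_def set_map sum.reindex[OF g] by (auto intro!: sum.cong simp: weight)
qed

section \<open>Flattening\<close>

lemma labels_map_fst_preserving: "(\<And>y. fst (g y) = fst y) \<Longrightarrow> labels (map g w) = labels w"
  unfolding labels_def by (simp add: image_image)

lemma gauss_word_map_involution:
  assumes inv: "\<And>y. g (g y) = y" and fst: "\<And>y. fst (g y) = fst y"
  shows "gauss_word (map g w) \<longleftrightarrow> gauss_word w"
proof -
  have inj: "inj_on g A" for A by (metis inj_on_inverseI inv)
  have mem: "y \<in> set (map g w) \<longleftrightarrow> g y \<in> set w" for y
    by (metis image_iff inv list.set_map)
  have ends: "{g (c, True), g (c, False)} = {(c, True), (c, False)}" for c
  proof -
    have "g (c, b) = (c, True) \<or> g (c, b) = (c, False)" for b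
      using fst[of "(c, b)"] by (cases "g (c, b)") auto
    moreover have "g (c, True) \<noteq> g (c, False)" using inj[of UNIV] by (auto dest: injD)
    ultimately show ?thesis by (metis insert_commute)
  qed
  have "(c, True) \<in> set (map g w) \<and> (c, False) \<in> set (map g w) \<longleftrightarrow>
        (c, True) \<in> set w \<and> (c, False) \<in> set w" for c
    unfolding mem using ends[of c] by (auto simp: doubleton_eq_iff)
  then show ?thesis
    unfolding gauss_word_def labels_map_fst_preserving[OF fst] distinct_map using inj by auto
qed

definition flat_letter :: "(nat \<Rightarrow> int) \<Rightarrow> letter \<Rightarrow> letter" where
  "flat_letter s y = (fst y, snd y = (s (fst y) = 1))"

lemma fst_flat_letter [simp]: "fst (flat_letter s y) = fst y"
  and flat_letter_flat_letter [simp]: "flat_letter s (flat_letter s y) = y"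
  unfolding flat_letter_def by (auto simp: prod_eq_iff)

lemma flatten_eq_map: "flatten (w, s) = map (flat_letter s) w"
  unfolding flatten_def flat_letter_def by (simp add: case_prod_beta)

lemma labels_map_flat_letter [simp]: "labels (map (flat_letter s) w) = labels w"
  by (simp add: labels_map_fst_preserving)

lemma gauss_word_map_flat_letter [simp]: "gauss_word (map (flat_letter s) w) \<longleftrightarrow> gauss_word w"
  by (simp add: gauss_word_map_involution)

lemma gauss_word_flatten: "gauss_wf K \<Longrightarrow> gauss_word (flatten K)"
  by (cases K) (simp add: gauss_wf_iff flatten_eq_map)

lemma arc_index_flatten:
  assumes w: "gauss_word w" and signs: "\<forall>c\<in>labels w. s c = 1 \<or> s c = -1" and c: "c \<in> labels w"
  shows "arc_index (\<lambda>_. 1) (map (flat_letter s) w) c = s c * arc_index s w c"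
proof -
  have inj: "inj_on (flat_letter s) (set w)" by (metis flat_letter_flat_letter inj_on_inverseI)
  have "letter_weight (\<lambda>_. 1) (flat_letter s y) = letter_weight s y" if "y \<in> set w" for y
    using signs that unfolding labels_def letter_weight_def flat_letter_def by force
  note flat_arc = arc_sum_map[OF inj _ _ this]
  have cT: "(c, True) \<in> set w" and cF: "(c, False) \<in> set w" using w c unfolding gauss_word_def by auto
  show ?thesis
  proof (cases "s c = 1")
    case True
    then have "flat_letter s (c, b) = (c, b)" for b by (simp add: flat_letter_def)
    then show ?thesis using flat_arc[OF cT cF] True by (simp add: arc_index_def)
  next
    case False
    then have "s c = -1" using signs c by auto
    then have "flat_letter s (c, b) = (c, \<not> b)" for b by (simp add: flat_letter_def)
    then have "arc_index (\<lambda>_. 1) (map (flat_letter s) w) c = arc_sum s w (c, False) (c, True)"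
      using flat_arc[OF cF cT] by (simp add: arc_index_def)
    also have "\<dots> = - arc_index s w c"
      using arc_sum_swap_ends[OF w cT cF] by (simp add: arc_index_def letter_weight_def)
    finally show ?thesis using \<open>s c = -1\<close> by simp
  qed
qed

definition frakF_flat :: "letter list \<Rightarrow> real \<Rightarrow> real" where
  "frakF_flat w t = (\<Sum>c\<in>labels w. t powi arc_index (\<lambda>_. 1) w c - t powi - arc_index (\<lambda>_. 1) w c)"

(* No hypothesis t \<noteq> 0 is needed: powi is total, and both sides agree also at t = 0. *)
lemma frakF_eq_frakF_flat:
  assumes "gauss_wf K"
  shows "frakF K t = frakF_flat (flatten K) t"
proof -
  obtain w s where K: "K = (w, s)" by fastforce
  have w: "gauss_word w" and signs: "\<forall>c\<in>labels w. s c = 1 \<or> s c = -1"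
    using assms unfolding K gauss_wf_iff by auto
  have "frakF K t = (\<Sum>c\<in>labels w.
      (if chord_index K c \<noteq> 0 then real_of_int (s c) * t powi chord_index K c else 0) -
      (if chord_index K c \<noteq> 0 then real_of_int (s c) * inverse t powi chord_index K c else 0))"
    unfolding frakF_def writhe_poly_def K by (simp add: sum_subtractf)
  also have "\<dots> = frakF_flat (flatten K) t"
    unfolding frakF_flat_def K flatten_eq_map labels_map_flat_letter
  proof (rule sum.cong[OF refl])
    fix c assume c: "c \<in> labels w"
    then show "(if chord_index (w, s) c \<noteq> 0 then real_of_int (s c) * t powi chord_index (w, s) c else 0) -
      (if chord_index (w, s) c \<noteq> 0 then real_of_int (s c) * inverse t powi chord_index (w, s) c else 0) =
      t powi arc_index (\<lambda>_. 1) (map (flat_letter s) w) c - t powi - arc_index (\<lambda>_. 1) (map (flat_letter s) w) c"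
      unfolding arc_index_flatten[OF w signs c] chord_index_eq_arc_index[OF w c]
      using signs by (cases "s c = 1") (auto simp: power_int_inverse power_int_minus)
  qed
  finally show ?thesis .
qed

section \<open>Arc sums under local changes of a word\<close>

lemma arc_sum_eq_sum_list:
  "distinct w \<Longrightarrow> arc_sum s w x z = sum_list (map (\<lambda>y. if between w x y z then letter_weight s y else 0) w)"
  unfolding arc_sum_def by (rule sum.distinct_set_conv_list)

lemma arc_sum_segment:
  assumes d: "distinct (A @ x # B @ z # C)"
  shows "arc_sum s (A @ x # B @ z # C) x z = sum_list (map (letter_weight s) B)"
proof -
  let ?w = "A @ x # B @ z # C"
  have pos: "lpos ?w x = length A" "lpos ?w z = Suc (length A + length B)"
    "\<And>y. y \<in> set A \<Longrightarrow> lpos ?w y < length A"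
    "\<And>y. y \<in> set B \<Longrightarrow> lpos ?w y = Suc (length A + lpos B y)"
    "\<And>y. y \<in> set C \<Longrightarrow> lpos ?w y = Suc (Suc (length A + length B + lpos C y))"
    using d by (auto simp: lpos_append_left lpos_append_right lpos_Cons_self lpos_Cons_other
        lpos_less_length)
  have "\<not> between ?w x y z" if "y \<in> set A" for y
    using pos(1,2) pos(3)[OF that] by (simp add: between_def cyc_between_def)
  moreover have "between ?w x y z" if "y \<in> set B" for y
    using pos(1,2) pos(4)[OF that] lpos_less_length[OF that] by (simp add: between_def cyc_between_def)
  moreover have "\<not> between ?w x y z" if "y \<in> set C" for y
    using pos(1,2) pos(5)[OF that] by (simp add: between_def cyc_between_def)
  ultimately show ?thesis unfolding arc_sum_eq_sum_list[OF d] by (simp cong: map_cong)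
qed

lemma arc_sum_rotate1:
  assumes d: "distinct w" and x: "x \<in> set w" and z: "z \<in> set w"
  shows "arc_sum s (rotate1 w) x z = arc_sum s w x z"
proof (cases w)
  case Nil then show ?thesis by simp
next
  case (Cons a u)
  have pos: "lpos (rotate1 w) y = (if lpos w y = 0 then length w - 1 else lpos w y - 1)"
    if "y \<in> set w" for y
    using that d Cons by (cases "y = a")
      (auto simp: lpos_append_left lpos_append_right lpos_Cons_self lpos_Cons_other)
  have "between (rotate1 w) x y z = between w x y z" if "y \<in> set w" for y
    unfolding between_def pos[OF x] pos[OF that] pos[OF z]
    by (rule cyc_between_rotate) (use x z that lpos_less_length in auto)
  then show ?thesis unfolding arc_sum_def by simp
qed

lemma arc_sum_insert_pair:
  assumes d: "distinct (u @ p # q # v)" and x: "x \<in> set (u @ v)" and z: "z \<in> set (u @ v)"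
    and cancel: "letter_weight s p + letter_weight s q = 0"
  shows "arc_sum s (u @ p # q # v) x z = arc_sum s (u @ v) x z"
proof -
  let ?w' = "u @ p # q # v" and ?w = "u @ v" and ?L = "length u"
  define m where "m i = (if i < ?L then i else i + 2)" for i
  have d0: "distinct ?w" using d by auto
  have pos: "lpos ?w' y = m (lpos ?w y)" if "y \<in> set ?w" for y
    unfolding m_def by (rule lpos_insert_pair[OF d that])
  note pq = lpos_pair[OF d]
  have "strict_mono m" unfolding m_def strict_mono_def by auto
  then have same: "between ?w' x y z = between ?w x y z" if "y \<in> set ?w" for y
    unfolding between_def pos[OF x] pos[OF z] pos[OF that] by (rule cyc_between_strict_mono)
  have avoid: "m i \<notin> {?L, Suc ?L}" for i unfolding m_def by auto
  have "between ?w' x p z = between ?w' x q z"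
    unfolding between_def pq pos[OF x] pos[OF z] by (rule cyc_between_adjacent[OF avoid avoid])
  then have "(if between ?w' x p z then letter_weight s p else 0)
      + (if between ?w' x q z then letter_weight s q else 0) = 0"
    using cancel by simp
  then show ?thesis
    unfolding arc_sum_eq_sum_list[OF d] arc_sum_eq_sum_list[OF d0]
    by (simp add: same cong: map_cong)
qed

lemma arc_sum_swap_adjacent:
  assumes d: "distinct (u @ p # q # v)" and x: "x \<in> set (u @ p # q # v)" and z: "z \<in> set (u @ p # q # v)"
    and "x \<noteq> z" and "{x, z} \<noteq> {p, q}"
  shows "arc_sum s (u @ q # p # v) x z = arc_sum s (u @ p # q # v) x z
    + (if x = p then - letter_weight s q else 0) + (if x = q then letter_weight s p else 0)
    + (if z = p then letter_weight s q else 0) + (if z = q then - letter_weight s p else 0)"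
proof -
  let ?w = "u @ p # q # v" and ?w' = "u @ q # p # v" and ?L = "length u"
  define \<tau> where "\<tau> = Transposition.transpose ?L (Suc ?L)"
  have d': "distinct ?w'" using d by auto
  note pq = lpos_pair[OF d] and pos = lpos_swap_adjacent[OF d, folded \<tau>_def]
  have p: "p \<in> set ?w" and q: "q \<in> set ?w" by simp_all
  have "p \<noteq> q" using d by simp
  have xp: "lpos ?w x = ?L \<longleftrightarrow> x = p" and xq: "lpos ?w x = Suc ?L \<longleftrightarrow> x = q"
    and zp: "lpos ?w z = ?L \<longleftrightarrow> z = p" and zq: "lpos ?w z = Suc ?L \<longleftrightarrow> z = q"
    using lpos_eq_iff[OF x p] lpos_eq_iff[OF x q] lpos_eq_iff[OF z p] lpos_eq_iff[OF z q]
    unfolding pq by simp_all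
  have xz: "lpos ?w x \<noteq> lpos ?w z" "{lpos ?w x, lpos ?w z} \<noteq> {?L, Suc ?L}"
    using assms(4,5) lpos_eq_iff[OF x z] \<open>p \<noteq> q\<close> by (auto simp: doubleton_eq_iff xp xq zp zq)
  have same: "between ?w' x y z = between ?w x y z" if y: "y \<in> set u \<or> y \<in> set v" for y
  proof -
    have yw: "y \<in> set ?w" and "y \<noteq> p" "y \<noteq> q" using y d by auto
    then have "lpos ?w y \<notin> {?L, Suc ?L}"
      using lpos_eq_iff[OF yw p] lpos_eq_iff[OF yw q] unfolding pq by auto
    then have "\<not> {?L, Suc ?L} \<subseteq> {lpos ?w x, lpos ?w y, lpos ?w z}" using xz by auto
    then show ?thesis unfolding between_def pos[OF x] pos[OF yw] pos[OF z] \<tau>_def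
      by (rule cyc_between_transpose)
  qed
  have "(if between ?w' x p z then letter_weight s p else 0) + (if between ?w' x q z then letter_weight s q else 0)
      = (if between ?w x p z then letter_weight s p else 0) + (if between ?w x q z then letter_weight s q else 0)
        + ((if x = p then - letter_weight s q else 0) + (if x = q then letter_weight s p else 0)
        + (if z = p then letter_weight s q else 0) + (if z = q then - letter_weight s p else 0))"
    using cyc_between_transpose_adjacent[OF xz, of "letter_weight s p" "letter_weight s q"]
    unfolding between_def pos[OF x] pos[OF z] pos[OF p] pos[OF q] pq \<tau>_def
    by (simp add: xp xq zp zq)
  then show ?thesis unfolding arc_sum_eq_sum_list[OF d] arc_sum_eq_sum_list[OF d']
    by (simp add: same cong: map_cong)
qed

section \<open>Invariance under flat moves\<close>

lemma gauss_word_add_chords: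
  assumes "distinct w' \<longleftrightarrow> distinct w" and "set w' = set w \<union> C \<times> UNIV" and "C \<inter> labels w = {}"
  shows "gauss_word w' \<longleftrightarrow> gauss_word w"
proof -
  have labels: "labels w' = labels w \<union> C" unfolding labels_def assms(2) by force
  have old: "(c, b) \<in> set w' \<longleftrightarrow> (c, b) \<in> set w" if "c \<in> labels w" for c b
    using assms(2,3) that by auto
  have new: "(c, b) \<in> set w'" if "c \<in> C" for c b
    using assms(2) that by auto
  show ?thesis unfolding gauss_word_def labels assms(1) by (simp add: ball_Un old new)
qed

lemma gauss_word_rotate [simp]: "gauss_word (rotate n w) \<longleftrightarrow> gauss_word w"
  by (rule gauss_word_add_chords[where C = "{}"]) simp_all

lemma labels_map_apfst: "labels (map (apfst f) w) = f ` labels w"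
  unfolding labels_def by (auto simp: image_image)

lemma inj_on_apfst: "inj_on f (labels w) \<Longrightarrow> inj_on (apfst f) (set w)"
  unfolding inj_on_def labels_def by (auto simp: prod_eq_iff)

lemma gauss_word_map_apfst:
  assumes f: "inj_on f (labels w)"
  shows "gauss_word (map (apfst f) w) \<longleftrightarrow> gauss_word w"
proof -
  have "(f c, b) \<in> set (map (apfst f) w) \<longleftrightarrow> (c, b) \<in> set w" if "c \<in> labels w" for c b
  proof
    assume "(f c, b) \<in> set (map (apfst f) w)"
    then obtain y where y: "y \<in> set w" "apfst f y = (f c, b)" by auto
    have "f (fst y) = f c" using y(2) by (cases y) simp
    moreover have "fst y \<in> labels w" using y(1) by (simp add: labels_def)
    ultimately have "fst y = c" using inj_onD[OF f _ _ that] by blast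
    then show "(c, b) \<in> set w" using y by (cases y) auto
  qed force
  then show ?thesis
    unfolding gauss_word_def labels_map_apfst distinct_map using inj_on_apfst[OF f] by auto
qed

lemma frakF_flat_cong:
  assumes "labels w' = labels w" and "\<And>c. c \<in> labels w \<Longrightarrow> arc_index (\<lambda>_. 1) w' c = arc_index (\<lambda>_. 1) w c"
  shows "frakF_flat w' t = frakF_flat w t"
  unfolding frakF_flat_def using assms by simp

lemma frakF_flat_rotate1:
  assumes "gauss_word w"
  shows "frakF_flat (rotate1 w) t = frakF_flat w t"
proof (rule frakF_flat_cong)
  show "labels (rotate1 w) = labels w" by (simp add: labels_def)
  show "arc_index (\<lambda>_. 1) (rotate1 w) c = arc_index (\<lambda>_. 1) w c" if "c \<in> labels w" for c
    using assms that arc_sum_rotate1 unfolding arc_index_def gauss_word_def by simp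
qed

lemma frakF_flat_rotate: "gauss_word w \<Longrightarrow> frakF_flat (rotate n w) t = frakF_flat w t"
  by (induction n) (simp_all add: frakF_flat_rotate1)

lemma frakF_flat_map_apfst:
  assumes f: "inj_on f (labels w)" and w: "gauss_word w"
  shows "frakF_flat (map (apfst f) w) t = frakF_flat w t"
proof -
  have "arc_index (\<lambda>_. 1) (map (apfst f) w) (f c) = arc_index (\<lambda>_. 1) w c" if "c \<in> labels w" for c
    using arc_sum_map[OF inj_on_apfst[OF f], of "(c, True)" "(c, False)" "\<lambda>_. 1" "\<lambda>_. 1"] that w
    unfolding arc_index_def gauss_word_def by (simp add: letter_weight_def)
  then show ?thesis unfolding frakF_flat_def labels_map_apfst sum.reindex[OF f] by simp
qed

lemma arc_index_tail_first:
  "distinct (A @ (c, True) # B @ (c, False) # C) \<Longrightarrow>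
     arc_index s (A @ (c, True) # B @ (c, False) # C) c = sum_list (map (letter_weight s) B)"
  unfolding arc_index_def by (rule arc_sum_segment)

lemma arc_index_head_first:
  assumes "gauss_word (A @ (c, False) # B @ (c, True) # C)"
  shows "arc_index s (A @ (c, False) # B @ (c, True) # C) c = - sum_list (map (letter_weight s) B)"
  using arc_sum_swap_ends[OF assms, of "(c, False)" "(c, True)" s] arc_sum_segment[of A "(c, False)" B "(c, True)" C s]
    assms
  unfolding arc_index_def gauss_word_def by (simp add: letter_weight_def)

lemma arc_index_insert_pair:
  assumes "distinct (u @ p # q # v)" and "(c, True) \<in> set (u @ v)" and "(c, False) \<in> set (u @ v)"
    and "letter_weight s p + letter_weight s q = 0"
  shows "arc_index s (u @ p # q # v) c = arc_index s (u @ v) c"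
  unfolding arc_index_def using assms by (rule arc_sum_insert_pair)

definition swap_shift :: "(nat \<Rightarrow> int) \<Rightarrow> letter \<Rightarrow> letter \<Rightarrow> nat \<Rightarrow> int" where
  "swap_shift s p q c =
     (if c = fst p then (if snd p then - letter_weight s q else letter_weight s q)
      else if c = fst q then (if snd q then letter_weight s p else - letter_weight s p) else 0)"

lemma arc_index_swap_adjacent:
  assumes "distinct (u @ p # q # v)" and "fst p \<noteq> fst q"
    and "(c, True) \<in> set (u @ p # q # v)" and "(c, False) \<in> set (u @ p # q # v)"
  shows "arc_index s (u @ q # p # v) c = arc_index s (u @ p # q # v) c + swap_shift s p q c"
  using arc_sum_swap_adjacent[OF assms(1,3,4), of s] assms(2)
  unfolding arc_index_def swap_shift_def by (cases p; cases q) (auto simp: doubleton_eq_iff)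

lemma gauss_word_F1:
  "c \<notin> labels (u @ v) \<Longrightarrow> gauss_word (u @ [(c, b), (c, \<not> b)] @ v) \<longleftrightarrow> gauss_word (u @ v)"
  by (rule gauss_word_add_chords[where C = "{c}"]) (auto simp: notin_labels)

lemma frakF_flat_F1:
  assumes c: "c \<notin> labels (u @ v)" and w: "gauss_word (u @ v)"
  shows "frakF_flat (u @ [(c, b), (c, \<not> b)] @ v) t = frakF_flat (u @ v) t"
proof -
  let ?w = "u @ [(c, b), (c, \<not> b)] @ v"
  have w': "gauss_word ?w" using gauss_word_F1[OF c] w by simp
  then have d': "distinct ?w" unfolding gauss_word_def by simp
  have "arc_index (\<lambda>_. 1) ?w c = 0"
  proof (cases b)
    case True
    then show ?thesis using arc_index_tail_first[of u c "[]" v] d' by simp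
  next
    case False
    then show ?thesis using arc_index_head_first[of u c "[]" v] w' by simp
  qed
  moreover have "arc_index (\<lambda>_. 1) ?w e = arc_index (\<lambda>_. 1) (u @ v) e" if "e \<in> labels (u @ v)" for e
    using arc_index_insert_pair[of u "(c, b)" "(c, \<not> b)" v e] w that d'
    by (auto simp: gauss_word_def letter_weight_def)
  ultimately show ?thesis using c unfolding frakF_flat_def by simp
qed

lemma gauss_word_F2:
  assumes "c \<notin> labels (u @ v @ x)" "d \<notin> labels (u @ v @ x)" "c \<noteq> d"
    and "P \<in> {[(c, \<not> b), (d, b)], [(d, b), (c, \<not> b)]}"
  shows "gauss_word (u @ [(c, b), (d, \<not> b)] @ v @ P @ x) \<longleftrightarrow> gauss_word (u @ v @ x)"
proof (rule gauss_word_add_chords[where C = "{c, d}"])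
  show "distinct (u @ [(c, b), (d, \<not> b)] @ v @ P @ x) \<longleftrightarrow> distinct (u @ v @ x)"
    using assms notin_labels[OF assms(1)] notin_labels[OF assms(2)] by (cases b) auto
  show "set (u @ [(c, b), (d, \<not> b)] @ v @ P @ x) = set (u @ v @ x) \<union> {c, d} \<times> UNIV"
    using assms(4) by (cases b) auto
qed (use assms in auto)

lemma arc_index_F2_opposite:
  assumes w: "gauss_word (u @ [(c, b), (d, \<not> b)] @ v @ P @ x)"
    and P: "P \<in> {[(c, \<not> b), (d, b)], [(d, b), (c, \<not> b)]}"
  shows "arc_index (\<lambda>_. 1) (u @ [(c, b), (d, \<not> b)] @ v @ P @ x) d =
    - arc_index (\<lambda>_. 1) (u @ [(c, b), (d, \<not> b)] @ v @ P @ x) c"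
proof -
  have dist: "distinct (u @ [(c, b), (d, \<not> b)] @ v @ P @ x)" using w unfolding gauss_word_def by simp
  show ?thesis
  proof (cases b)
    case True
    with P consider "P = [(c, False), (d, True)]" | "P = [(d, True), (c, False)]" by auto
    then show ?thesis
      using arc_index_tail_first[of u c "(d, False) # v" "(d, True) # x"]
        arc_index_head_first[of "u @ [(c, True)]" d "v @ [(c, False)]" x]
        arc_index_tail_first[of u c "(d, False) # v @ [(d, True)]" x]
        arc_index_head_first[of "u @ [(c, True)]" d v "(c, False) # x"] dist w True
      by cases (simp_all add: letter_weight_def)
  next
    case False
    with P consider "P = [(c, True), (d, False)]" | "P = [(d, False), (c, True)]" by auto
    then show ?thesis
      using arc_index_head_first[of u c "(d, True) # v" "(d, False) # x"]
        arc_index_tail_first[of "u @ [(c, False)]" d "v @ [(c, True)]" x]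
        arc_index_head_first[of u c "(d, True) # v @ [(d, False)]" x]
        arc_index_tail_first[of "u @ [(c, False)]" d v "(c, True) # x"] dist w False
      by cases (simp_all add: letter_weight_def)
  qed
qed

lemma frakF_flat_F2:
  assumes c: "c \<notin> labels (u @ v @ x)" and d: "d \<notin> labels (u @ v @ x)" and "c \<noteq> d"
    and P: "P \<in> {[(c, \<not> b), (d, b)], [(d, b), (c, \<not> b)]}" and w: "gauss_word (u @ v @ x)"
  shows "frakF_flat (u @ [(c, b), (d, \<not> b)] @ v @ P @ x) t = frakF_flat (u @ v @ x) t"
proof -
  let ?w = "u @ [(c, b), (d, \<not> b)] @ v @ P @ x"
  have w': "gauss_word ?w" using gauss_word_F2[OF c d \<open>c \<noteq> d\<close> P] w by simp
  then have d': "distinct ?w" unfolding gauss_word_def by simp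
  have "arc_index (\<lambda>_. 1) ?w d = - arc_index (\<lambda>_. 1) ?w c"
    by (rule arc_index_F2_opposite[OF w' P])
  moreover have "arc_index (\<lambda>_. 1) ?w e = arc_index (\<lambda>_. 1) (u @ v @ x) e" if e: "e \<in> labels (u @ v @ x)" for e
  proof -
    obtain p q where pq: "P = [p, q]" and cancel: "letter_weight (\<lambda>_. 1) p + letter_weight (\<lambda>_. 1) q = 0"
      using P by (auto simp: letter_weight_def)
    have ends: "(e, True) \<in> set (u @ v @ x)" "(e, False) \<in> set (u @ v @ x)"
      using w e unfolding gauss_word_def by auto
    have "arc_index (\<lambda>_. 1) ?w e = arc_index (\<lambda>_. 1) (u @ v @ p # q # x) e"
      using arc_index_insert_pair[of u "(c, b)" "(d, \<not> b)" "v @ p # q # x" e] d' ends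
      unfolding pq by (auto simp: letter_weight_def)
    also have "\<dots> = arc_index (\<lambda>_. 1) (u @ v @ x) e"
      using arc_index_insert_pair[of "u @ v" p q x e] d' ends cancel unfolding pq by auto
    finally show ?thesis .
  qed
  moreover have "labels ?w = insert c (insert d (labels (u @ v @ x)))" using P by auto
  ultimately show ?thesis using c d \<open>c \<noteq> d\<close> unfolding frakF_flat_def by (simp del: labels_append)
qed

lemma F3_cond_distinct_labels: "F3_cond a b c d e f \<Longrightarrow> fst a \<noteq> fst b \<and> fst c \<noteq> fst d \<and> fst e \<noteq> fst f"
  unfolding F3_cond_def by (auto simp: doubleton_eq_iff)

lemma F3_cond_swap_shifts_cancel:
  assumes F: "F3_cond a b c d e f" and dist: "distinct [a, b, c, d, e, f]"
  shows "swap_shift (\<lambda>_. 1) a b z + swap_shift (\<lambda>_. 1) c d z + swap_shift (\<lambda>_. 1) e f z = 0"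
proof -
  obtain X Y Z where XYZ: "distinct [X, Y, Z]" and
    ab: "{fst a, fst b} = {X, Z}" and cd: "{fst c, fst d} = {X, Y}" and ef: "{fst e, fst f} = {Y, Z}" and
    r: "let eta1 = (fst a = X); eta2 = (fst c = Y); eta3 = (fst e = Z);
           rX = sg (eta1 = eta2) * sg ((X, True) \<in> {c, d});
           rY = sg (eta2 = eta3) * sg ((Y, True) \<in> {e, f});
           rZ = sg (eta3 = eta1) * sg ((Z, True) \<in> {a, b})
       in rX = rY \<and> rY = rZ"
    using F unfolding F3_cond_def by blast
  obtain a1 a2 b1 b2 c1 c2 d1 d2 e1 e2 f1 f2 where
    letters: "a = (a1, a2)" "b = (b1, b2)" "c = (c1, c2)" "d = (d1, d2)" "e = (e1, e2)" "f = (f1, f2)"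
    by (cases a, cases b, cases c, cases d, cases e, cases f) auto
  have ab': "(a1 = X \<and> b1 = Z) \<or> (a1 = Z \<and> b1 = X)" and cd': "(c1 = X \<and> d1 = Y) \<or> (c1 = Y \<and> d1 = X)"
    and ef': "(e1 = Y \<and> f1 = Z) \<or> (e1 = Z \<and> f1 = Y)"
    using ab cd ef XYZ unfolding letters by (auto simp: doubleton_eq_iff)
  have XYZ': "X \<noteq> Y" "X \<noteq> Z" "Y \<noteq> Z" "Y \<noteq> X" "Z \<noteq> X" "Z \<noteq> Y" using XYZ by auto
  show ?thesis
    using ab' cd' ef' r dist unfolding letters swap_shift_def
    apply (elim disjE conjE)
    apply (hypsubst_thin)+
    apply (cases a2; cases b2; cases c2; cases d2; cases e2; cases f2;
        simp add: XYZ' letter_weight_def sg_def Let_def)+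
    done
qed

lemma gauss_word_F3:
  "gauss_word (u @ [b, a] @ v @ [d, c] @ x @ [f, e] @ y) \<longleftrightarrow>
   gauss_word (u @ [a, b] @ v @ [c, d] @ x @ [e, f] @ y)"
  by (rule gauss_word_add_chords[where C = "{}"]) auto

lemma frakF_flat_F3:
  assumes F: "F3_cond a b c d e f" and w: "gauss_word (u @ [a, b] @ v @ [c, d] @ x @ [e, f] @ y)"
  shows "frakF_flat (u @ [b, a] @ v @ [d, c] @ x @ [f, e] @ y) t =
         frakF_flat (u @ [a, b] @ v @ [c, d] @ x @ [e, f] @ y) t"
proof (rule frakF_flat_cong)
  let ?w0 = "u @ [a, b] @ v @ [c, d] @ x @ [e, f] @ y"
  let ?w1 = "u @ [b, a] @ v @ [c, d] @ x @ [e, f] @ y"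
  let ?w2 = "u @ [b, a] @ v @ [d, c] @ x @ [e, f] @ y"
  let ?w3 = "u @ [b, a] @ v @ [d, c] @ x @ [f, e] @ y"
  show "labels ?w3 = labels ?w0" by auto
  fix z assume z: "z \<in> labels ?w0"
  have d0: "distinct ?w0" using w unfolding gauss_word_def by simp
  have ends: "(z, True) \<in> set ?w0" "(z, False) \<in> set ?w0" using w z unfolding gauss_word_def by blast+
  note swap = arc_index_swap_adjacent[where s = "\<lambda>_. 1" and c = z]
  note labels = F3_cond_distinct_labels[OF F]
  have "arc_index (\<lambda>_. 1) ?w1 z = arc_index (\<lambda>_. 1) ?w0 z + swap_shift (\<lambda>_. 1) a b z"
    using swap[of u a b "v @ [c, d] @ x @ [e, f] @ y"] d0 labels ends by simp
  moreover have "arc_index (\<lambda>_. 1) ?w2 z = arc_index (\<lambda>_. 1) ?w1 z + swap_shift (\<lambda>_. 1) c d z"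
    using swap[of "u @ [b, a] @ v" c d "x @ [e, f] @ y"] d0 labels ends by auto
  moreover have "arc_index (\<lambda>_. 1) ?w3 z = arc_index (\<lambda>_. 1) ?w2 z + swap_shift (\<lambda>_. 1) e f z"
    using swap[of "u @ [b, a] @ v @ [d, c] @ x" e f y] d0 labels ends by auto
  moreover have "distinct [a, b, c, d, e, f]" using d0 by auto
  then have "swap_shift (\<lambda>_. 1) a b z + swap_shift (\<lambda>_. 1) c d z + swap_shift (\<lambda>_. 1) e f z = 0"
    by (rule F3_cond_swap_shifts_cancel[OF F])
  ultimately show "arc_index (\<lambda>_. 1) ?w3 z = arc_index (\<lambda>_. 1) ?w0 z" by linarith
qed

lemma case_prod_apfst: "(\<lambda>(c, b). (f c, b)) = apfst f"
  by (auto simp: fun_eq_iff)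

lemma flat_step_cases:
  assumes "flat_step w w'"
  obtains (rotate) n where "w' = rotate n w"
  | (rename) f where "inj_on f (labels w)" "w' = map (apfst f) w"
  | (F1) u v c b where "w = u @ v" "c \<notin> labels w" "w' = u @ [(c, b), (c, \<not> b)] @ v"
  | (F2) u v x c d b P where "w = u @ v @ x" "c \<notin> labels w" "d \<notin> labels w" "c \<noteq> d"
      "P \<in> {[(c, \<not> b), (d, b)], [(d, b), (c, \<not> b)]}" "w' = u @ [(c, b), (d, \<not> b)] @ v @ P @ x"
  | (F3) u v x y a b c d e f where "F3_cond a b c d e f"
      "w = u @ [a, b] @ v @ [c, d] @ x @ [e, f] @ y" "w' = u @ [b, a] @ v @ [d, c] @ x @ [f, e] @ y"
  using assms unfolding flat_step_def
proof (elim disjE)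
  assume "frot_move w w'"
  then show thesis using rotate unfolding frot_move_def by blast
next
  assume "fiso_move w w'"
  then show thesis using rename unfolding fiso_move_def case_prod_apfst by blast
next
  assume "F1_move w w'"
  then show thesis using F1 unfolding F1_move_def by blast
next
  assume "F2_move w w'"
  then obtain u v x c d b where "w = u @ v @ x" "c \<notin> labels w" "d \<notin> labels w" "c \<noteq> d"
    "w' = u @ [(c, b), (d, \<not> b)] @ v @ [(c, \<not> b), (d, b)] @ x \<or>
     w' = u @ [(c, b), (d, \<not> b)] @ v @ [(d, b), (c, \<not> b)] @ x"
    unfolding F2_move_def by blast
  then show thesis using F2[of u v x c d "[(c, \<not> b), (d, b)]" b] F2[of u v x c d "[(d, b), (c, \<not> b)]" b]
    by blast
next
  assume "F3_move w w'"
  then show thesis using F3 unfolding F3_move_def by blast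
qed

lemma flat_step_gauss_word:
  assumes "flat_step w w'"
  shows "gauss_word w' \<longleftrightarrow> gauss_word w"
  using assms
proof (cases rule: flat_step_cases)
  case (rename f)
  then show ?thesis by (simp add: gauss_word_map_apfst)
next
  case (F1 u v c b)
  then show ?thesis using gauss_word_F1[of c u v b] by simp
next
  case (F2 u v x c d b P)
  then show ?thesis using gauss_word_F2[of c u v x d P b] by simp
next
  case (F3 u v x y a b c d e f)
  then show ?thesis using gauss_word_F3[of u b a v d c x f e y] by simp
qed simp

lemma flat_step_frakF_flat:
  assumes "flat_step w w'" and "gauss_word w"
  shows "frakF_flat w' t = frakF_flat w t"
  using assms(1)
proof (cases rule: flat_step_cases)
  case (rotate n)
  then show ?thesis using assms(2) by (simp add: frakF_flat_rotate)
next
  case (rename f)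
  then show ?thesis using assms(2) by (simp add: frakF_flat_map_apfst)
next
  case (F1 u v c b)
  then show ?thesis using assms(2) frakF_flat_F1 by simp
next
  case (F2 u v x c d b P)
  then show ?thesis using assms(2) frakF_flat_F2 by simp
next
  case (F3 u v x y a b c d e f)
  then show ?thesis using assms(2) frakF_flat_F3 by simp
qed

lemma flat_equiv_frakF_flat:
  assumes "flat_equiv w w'" and "gauss_word w"
  shows "gauss_word w' \<and> frakF_flat w' t = frakF_flat w t"
  using assms unfolding flat_equiv_def
proof (induction rule: rtranclp_induct)
  case (step w' w'')
  then show ?case using flat_step_gauss_word flat_step_frakF_flat by metis
qed simp

section \<open>Generalized moves and crossing changes\<close>

lemma map_flat_letter_cong:
  "(\<And>c. c \<in> labels u \<Longrightarrow> s' c = s c) \<Longrightarrow> map (flat_letter s') u = map (flat_letter s) u"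
  by (rule map_cong[OF refl]) (auto simp: flat_letter_def labels_def)

lemma rot_move_flat_step:
  assumes "rot_move K K'"
  shows "gauss_wf K' \<longleftrightarrow> gauss_wf K" and "flat_step\<^sup>=\<^sup>= (flatten K) (flatten K')"
proof -
  obtain w s n where K: "K = (w, s)" and K': "K' = (rotate n w, s)"
    using assms unfolding rot_move_def by blast
  show "gauss_wf K' \<longleftrightarrow> gauss_wf K" unfolding K K' gauss_wf_iff by (simp add: labels_def)
  show "flat_step\<^sup>=\<^sup>= (flatten K) (flatten K')"
    unfolding K K' flatten_eq_map flat_step_def frot_move_def by (auto simp: rotate_map)
qed

lemma iso_move_flat_step:
  assumes "iso_move K K'"
  shows "gauss_wf K' \<longleftrightarrow> gauss_wf K" and "flat_step\<^sup>=\<^sup>= (flatten K) (flatten K')"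
proof -
  obtain w s w' s' f where K: "K = (w, s)" and K': "K' = (w', s')" and f: "inj_on f (labels w)"
    and w': "w' = map (apfst f) w" and s': "\<forall>c\<in>labels w. s' (f c) = s c"
    using assms unfolding iso_move_def case_prod_apfst by blast
  show "gauss_wf K' \<longleftrightarrow> gauss_wf K"
    unfolding K K' gauss_wf_iff w' gauss_word_map_apfst[OF f] labels_map_apfst using s' by auto
  have "map (flat_letter s') w' = map (apfst f) (map (flat_letter s) w)"
    unfolding w' map_map using s' by (auto simp: flat_letter_def labels_def)
  then show "flat_step\<^sup>=\<^sup>= (flatten K) (flatten K')"
    unfolding K K' flatten_eq_map flat_step_def fiso_move_def case_prod_apfst using f by auto
qed

lemma R1_move_flat_step:
  assumes "R1_move K K'"
  shows "gauss_wf K' \<longleftrightarrow> gauss_wf K" and "flat_step\<^sup>=\<^sup>= (flatten K) (flatten K')"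
proof -
  obtain u v s c ov e where K: "K = (u @ v, s)" and c: "c \<notin> labels (u @ v)" and e: "e = 1 \<or> e = -1"
    and K': "K' = (u @ [(c, ov), (c, \<not> ov)] @ v, s(c := e))"
    using assms unfolding R1_move_def by blast
  show "gauss_wf K' \<longleftrightarrow> gauss_wf K"
    using gauss_word_F1[OF c, of ov] c e unfolding K K' gauss_wf_iff by auto
  let ?U = "map (flat_letter s) u" and ?V = "map (flat_letter s) v" and ?b = "ov = (e = 1)"
  have "map (flat_letter (s(c := e))) u = ?U" "map (flat_letter (s(c := e))) v = ?V"
    using c by (intro map_flat_letter_cong; auto)+
  then have "flatten K' = ?U @ [(c, ?b), (c, \<not> ?b)] @ ?V"
    unfolding K' flatten_eq_map map_append by (auto simp: flat_letter_def)
  moreover have "flatten K = ?U @ ?V" unfolding K flatten_eq_map by simp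
  moreover have "F1_move (?U @ ?V) (?U @ [(c, ?b), (c, \<not> ?b)] @ ?V)"
    unfolding F1_move_def using c by (intro exI[of _ ?U] exI[of _ ?V] exI[of _ c] exI[of _ ?b]) simp
  ultimately have "F1_move (flatten K) (flatten K')" by simp
  then show "flat_step\<^sup>=\<^sup>= (flatten K) (flatten K')" unfolding flat_step_def by simp
qed

lemma R2_move_flat_step:
  assumes "R2_move K K'"
  shows "gauss_wf K' \<longleftrightarrow> gauss_wf K" and "flat_step\<^sup>=\<^sup>= (flatten K) (flatten K')"
proof -
  obtain u v x s c d ov e P where K: "K = (u @ v @ x, s)"
    and c: "c \<notin> labels (u @ v @ x)" and d: "d \<notin> labels (u @ v @ x)" and "c \<noteq> d" and e: "e = 1 \<or> e = -1"
    and P: "P \<in> {[(c, \<not> ov), (d, \<not> ov)], [(d, \<not> ov), (c, \<not> ov)]}"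
    and K': "K' = (u @ [(c, ov), (d, ov)] @ v @ P @ x, s(c := e, d := - e))"
    using assms unfolding R2_move_def by blast
  let ?s' = "s(c := e, d := - e)" and ?b = "ov = (e = 1)"
  let ?U = "map (flat_letter s) u" and ?V = "map (flat_letter s) v" and ?X = "map (flat_letter s) x"
  let ?P' = "map (flat_letter ?s') P"
  have "map (flat_letter ?s') u = ?U" "map (flat_letter ?s') v = ?V" "map (flat_letter ?s') x = ?X"
    using c d by (intro map_flat_letter_cong; auto)+
  moreover have fc: "flat_letter ?s' (c, y) = (c, y = (e = 1))" and fd: "flat_letter ?s' (d, y) = (d, \<not> (y = (e = 1)))"
    for y using \<open>c \<noteq> d\<close> e by (auto simp: flat_letter_def)
  ultimately have flat': "flatten K' = ?U @ [(c, ?b), (d, \<not> ?b)] @ ?V @ ?P' @ ?X"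
    unfolding K' flatten_eq_map map_append by simp
  have P': "?P' \<in> {[(c, \<not> ?b), (d, ?b)], [(d, ?b), (c, \<not> ?b)]}"
    using P by (auto simp: fc fd)
  have flat: "flatten K = ?U @ ?V @ ?X" unfolding K flatten_eq_map by simp
  have cd': "c \<notin> labels (?U @ ?V @ ?X)" "d \<notin> labels (?U @ ?V @ ?X)"
    using c d by (simp_all flip: map_append)
  have "F2_move (flatten K) (flatten K')"
    using P' cd' \<open>c \<noteq> d\<close> unfolding F2_move_def flat flat'
    by (intro exI[of _ ?U] exI[of _ ?V] exI[of _ ?X] exI[of _ c] exI[of _ d] exI[of _ ?b]) auto
  then show "flat_step\<^sup>=\<^sup>= (flatten K) (flatten K')" unfolding flat_step_def by simp
  have "gauss_word (flatten K') \<longleftrightarrow> gauss_word (flatten K)"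
    unfolding flat flat' by (rule gauss_word_F2[OF cd' \<open>c \<noteq> d\<close> P'])
  then have words: "gauss_word (u @ [(c, ov), (d, ov)] @ v @ P @ x) \<longleftrightarrow> gauss_word (u @ v @ x)"
    unfolding K K' flatten_eq_map gauss_word_map_flat_letter .
  have labels: "labels (u @ [(c, ov), (d, ov)] @ v @ P @ x) = insert c (insert d (labels (u @ v @ x)))"
    using P by auto
  have "?s' z = s z" if "z \<in> labels (u @ v @ x)" for z using that c d by auto
  then have "(\<forall>z\<in>insert c (insert d (labels (u @ v @ x))). ?s' z = 1 \<or> ?s' z = -1) \<longleftrightarrow>
      (\<forall>z\<in>labels (u @ v @ x). s z = 1 \<or> s z = -1)"
    using e by auto
  then show "gauss_wf K' \<longleftrightarrow> gauss_wf K"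
    unfolding K K' gauss_wf_iff labels words by blast
qed

lemma sg_flat_letters:
  assumes "{fst p, fst q} = {X, Y}" and "X \<noteq> Y" and "s X = 1 \<or> s X = -1"
  shows "sg ((X, True) \<in> {flat_letter s p, flat_letter s q}) = s X * sg ((X, True) \<in> {p, q})"
proof -
  obtain p1 p2 q1 q2 where pq: "p = (p1, p2)" "q = (q1, q2)" by fastforce
  have "(p1 = X \<and> q1 = Y) \<or> (p1 = Y \<and> q1 = X)"
    using assms(1,2) unfolding pq by (auto simp: doubleton_eq_iff)
  then show ?thesis using assms(2,3) unfolding pq
    by (elim disjE conjE; hypsubst_thin; cases p2; cases q2; auto simp: flat_letter_def sg_def)
qed

lemma R3_cond_F3_cond:
  assumes R: "R3_cond s a b c d e f" and signs: "\<forall>l\<in>{a, b, c, d, e, f}. s (fst l) = 1 \<or> s (fst l) = -1"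
  shows "F3_cond (flat_letter s a) (flat_letter s b) (flat_letter s c) (flat_letter s d)
    (flat_letter s e) (flat_letter s f)"
proof -
  obtain X Y Z where XYZ: "distinct [X, Y, Z]" and
    ab: "{fst a, fst b} = {X, Z}" and cd: "{fst c, fst d} = {X, Y}" and ef: "{fst e, fst f} = {Y, Z}" and
    r: "s X * sg ((fst a = X) = (fst c = Y)) * sg ((X, True) \<in> {c, d}) =
          s Y * sg ((fst c = Y) = (fst e = Z)) * sg ((Y, True) \<in> {e, f}) \<and>
        s Y * sg ((fst c = Y) = (fst e = Z)) * sg ((Y, True) \<in> {e, f}) =
          s Z * sg ((fst e = Z) = (fst a = X)) * sg ((Z, True) \<in> {a, b})"
    using R unfolding R3_cond_def Let_def by blast
  have "s X = 1 \<or> s X = -1" "s Y = 1 \<or> s Y = -1" "s Z = 1 \<or> s Z = -1"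
    using signs ab cd ef by (auto simp: doubleton_eq_iff)
  then have gX: "sg ((X, True) \<in> {flat_letter s c, flat_letter s d}) = s X * sg ((X, True) \<in> {c, d})"
    and gY: "sg ((Y, True) \<in> {flat_letter s e, flat_letter s f}) = s Y * sg ((Y, True) \<in> {e, f})"
    and gZ: "sg ((Z, True) \<in> {flat_letter s a, flat_letter s b}) = s Z * sg ((Z, True) \<in> {a, b})"
    using sg_flat_letters[of c d X Y s] sg_flat_letters[of e f Y Z s] sg_flat_letters[of a b Z X s]
      cd ef ab XYZ by (simp_all add: insert_commute)
  show ?thesis
    unfolding F3_cond_def
    apply (rule exI[of _ X], rule exI[of _ Y], rule exI[of _ Z])
    unfolding Let_def fst_flat_letter gX gY gZ using XYZ ab cd ef r by (simp add: mult_ac)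
qed

lemma R3_move_flat_step:
  assumes "R3_move K K'"
  shows "gauss_wf K' \<longleftrightarrow> gauss_wf K" and "gauss_wf K \<Longrightarrow> flat_step\<^sup>=\<^sup>= (flatten K) (flatten K')"
proof -
  obtain u v x y s a b c d e f where R: "R3_cond s a b c d e f" and
      K: "K = (u @ [a, b] @ v @ [c, d] @ x @ [e, f] @ y, s)" and
      K': "K' = (u @ [b, a] @ v @ [d, c] @ x @ [f, e] @ y, s)"
    using assms unfolding R3_move_def by blast
  show "gauss_wf K' \<longleftrightarrow> gauss_wf K"
    unfolding K K' gauss_wf_iff gauss_word_F3 by (simp add: insert_commute)
  assume "gauss_wf K"
  then have "\<forall>l\<in>{a, b, c, d, e, f}. s (fst l) = 1 \<or> s (fst l) = -1"
    unfolding K gauss_wf_iff labels_def by auto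
  then have "F3_move (flatten K) (flatten K')"
    using R3_cond_F3_cond[OF R] unfolding F3_move_def K K' flatten_eq_map by fastforce
  then show "flat_step\<^sup>=\<^sup>= (flatten K) (flatten K')" unfolding flat_step_def by simp
qed

lemma cc_move_flat_step:
  assumes "cc_move K K'"
  shows "gauss_wf K' \<longleftrightarrow> gauss_wf K" and "gauss_wf K \<Longrightarrow> flatten K' = flatten K"
proof -
  define h where "h c = (\<lambda>(d, ov). if d = c then (d, \<not> ov) else (d, ov))" for c :: nat
  obtain w s c where K: "K = (w, s)" and c: "c \<in> labels w" and K': "K' = (map (h c) w, s(c := - s c))"
    using assms unfolding cc_move_def h_def by blast
  have inv: "h c (h c y) = y" and fst: "fst (h c y) = fst y" for y by (auto simp: h_def split: prod.splits)
  show "gauss_wf K' \<longleftrightarrow> gauss_wf K"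
    unfolding K K' gauss_wf_iff gauss_word_map_involution[OF inv fst] labels_map_fst_preserving[OF fst]
    using c by auto
  assume "gauss_wf K"
  then have "s c = 1 \<or> s c = -1" using c unfolding K gauss_wf_iff by auto
  then show "flatten K' = flatten K"
    unfolding K K' flatten_eq_map map_map by (auto simp: h_def flat_letter_def split: prod.splits)
qed

lemma gen_step_flat_step:
  assumes "gen_step K K'"
  shows "gauss_wf K' \<longleftrightarrow> gauss_wf K" and "gauss_wf K \<Longrightarrow> flat_step\<^sup>=\<^sup>= (flatten K) (flatten K')"
proof -
  have moves: "rot_move K K' \<or> iso_move K K' \<or> R1_move K K' \<or> R2_move K K' \<or> R3_move K K' \<or> cc_move K K'"
    using assms unfolding gen_step_def .
  then show "gauss_wf K' \<longleftrightarrow> gauss_wf K"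
    by (elim disjE) (simp_all only: rot_move_flat_step iso_move_flat_step R1_move_flat_step
        R2_move_flat_step R3_move_flat_step cc_move_flat_step)
  show "flat_step\<^sup>=\<^sup>= (flatten K) (flatten K')" if "gauss_wf K"
    using moves rot_move_flat_step(2) iso_move_flat_step(2) R1_move_flat_step(2)
      R2_move_flat_step(2) R3_move_flat_step(2)[OF _ that] cc_move_flat_step(2)[OF _ that]
    by (elim disjE) auto
qed

lemma moves_cc_equiv_flat_equiv:
  assumes "moves_cc_equiv K K'" and "gauss_wf K"
  shows "gauss_wf K' \<and> flat_equiv (flatten K) (flatten K')"
  using assms unfolding moves_cc_equiv_def
proof (induction rule: rtranclp_induct)
  case (step K1 K2)
  then have "gauss_wf K1" and equiv: "flat_equiv (flatten K) (flatten K1)" by auto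
  with step.hyps(2) have "gauss_wf K2" and
    "flat_step\<^sup>=\<^sup>= (flatten K1) (flatten K2) \<or> flat_step\<^sup>=\<^sup>= (flatten K2) (flatten K1)"
    using gen_step_flat_step by blast+
  then show ?case
    using equiv unfolding flat_equiv_def by (auto intro: rtranclp.rtrancl_into_rtrancl)
qed (simp add: flat_equiv_def)

theorem proposition3p3:
  fixes K K' :: gdiag
  assumes "gauss_wf K"
  shows "(moves_cc_equiv K K' \<longrightarrow> (\<forall>t::real. t \<noteq> 0 \<longrightarrow> frakF K t = frakF K' t)) \<and>
         (gauss_wf K' \<and> flat_equiv (flatten K) (flatten K') \<longrightarrow>
            (\<forall>t::real. t \<noteq> 0 \<longrightarrow> frakF K t = frakF K' t))"
proof -
  have "frakF K t = frakF K' t" if "gauss_wf K'" and "flat_equiv (flatten K) (flatten K')" for t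
    using frakF_eq_frakF_flat[OF assms] frakF_eq_frakF_flat[OF that(1)]
      flat_equiv_frakF_flat[OF that(2) gauss_word_flatten[OF assms]] by simp
  then show ?thesis using moves_cc_equiv_flat_equiv[OF _ assms] by blast
qed

end
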